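(* For compiler constructions that are context-free (i.e., may be embedded in a context that reads all locations, so that offset synchronization at every control path join is necessary) and that conform to the principle that every machine code instruction that writes introduces maximal entropy, the entropy of the runtime trace is maximal among all ways of (randomly) varying the embedded constants in the machine code that preserve correctness of the compiled program.
   Context: Setting (encrypted computing with chaotic compilation). A processor computes on encrypted 32-bit words. The compiler is stochastic: recompiling the same source produces machine code and runtime traces of identical structure, differing only in encrypted constants embedded in instructions. At each program point the compiler maintains an obfuscation scheme assigning to every register and memory location $l$ an offset $\Delta l\in\mathbb{Z}/2^{32}$, the plaintext stored in $l$ at runtime being the nominal (programmer-intended) value plus $\Delta l$ mod $2^{32}$; each arithmetic instruction's embedded constant can set the offset of its target location to any value. The trace is the runtime sequence of writes to locations (viewed at the level of plaintexts beneath the encryption), a random variable over recompilations, with entropy $\mathbb{E}[-\log_2 f_T]$ where $f_T$ is its distribution. Correctness forces: copy instructions preserve data exactly, and where control paths join (loop ends, after conditionals, subroutine returns, goto targets) each location's offset must coincide on all joining paths. The principle "every instruction that writes introduces maximal entropy" means each arithmetic instruction that writes chooses the new offset of its target uniformly at random and independently of all other choices, subject only to these correctness constraints (the last writes to a location before a join on each path, called trailer instructions, share one common random offset), and input offsets (for locations read before being written) are uniform and independent. *)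

theory Defs
  imports "HOL-Probability.Probability" "HOL-Library.Word"
begin

text \<open>Abstract model of one compiled program and one fixed run (fixed inputs).
  'v : the offset variables = the arithmetic (writing) instructions with embedded
       constants, plus the input locations (read before written);
  sync : the synchronization relation: sync x y means correctness at some control
       path join forces the offsets chosen by x and y to coincide (trailer instructions
       for the same location at the same join, input offsets at loop heads, ...);
       context-freeness means every such synchronization is necessary, so the set of
       correct offset assignments is exactly those respecting sync;
  the run: n writes; write i goes to location loc i, has nominal value nom i, and the
       offset of its target after the write is the offset variable src i (for an
       arithmetic write, the instruction itself; for a copy, the variable that
       determined the offset of its source, since copies preserve data exactly).\<close>

type_synonym word32 = "32 word"

type_synonym 'v offsets = "'v \<Rightarrow> word32"

definition correct_offsets :: "('v \<Rightarrow> 'v \<Rightarrow> bool) \<Rightarrow> 'v offsets set" where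
  "correct_offsets sync = {\<delta>. \<forall>x y. sync x y \<longrightarrow> \<delta> x = \<delta> y}"

text \<open>The runtime trace (plaintexts beneath the encryption): the sequence of writes,
  each being the target location and the written plaintext = nominal value + offset.\<close>
definition run_trace ::
  "nat \<Rightarrow> (nat \<Rightarrow> 'l) \<Rightarrow> (nat \<Rightarrow> word32) \<Rightarrow> (nat \<Rightarrow> 'v) \<Rightarrow> 'v offsets \<Rightarrow> ('l \<times> word32) list" where
  "run_trace n loc nom src \<delta> = map (\<lambda>i. (loc i, nom i + \<delta> (src i))) [0..<n]"

text \<open>Maximal entropy principle: every equivalence class of synchronized offset
  variables (a single arithmetic write, a group of trailer instructions sharing one
  offset, an input) receives its own offset, uniformly at random and independently of
  all other choices.  Here sync is an equivalence relation; the class of v is sync v.\<close>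
definition max_entropy_compilation :: "('v::finite \<Rightarrow> 'v \<Rightarrow> bool) \<Rightarrow> 'v offsets pmf" where
  "max_entropy_compilation sync =
     map_pmf (\<lambda>g v. g (Collect (sync v))) (pmf_of_set (UNIV :: ('v set \<Rightarrow> word32) set))"

definition entropy_pmf :: "'a pmf \<Rightarrow> real" where
  "entropy_pmf p = measure_pmf.expectation p (\<lambda>x. - log 2 (pmf p x))"

end

theory Submission
  imports Defs "HOL-Library.Function_Algebras"
begin

text \<open>The maximal-entropy compilation draws one uniform offset per synchronization class.
  The trace is then a function of a uniform element of a finite group whose level sets
  are translates of each other, so the trace is uniform on its range.  Every correct
  compilation assigns a common offset to each class, so its traces lie in the same range;
  and the uniform distribution maximises entropy among distributions on a finite set.\<close>

lemma entropy_pmf_le_log_card: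
  fixes p :: "'a pmf"
  assumes "finite S" and "set_pmf p \<subseteq> S"
  shows "entropy_pmf p \<le> log 2 (card S)"
proof -
  define c where "c = real (card S)"
  have "S \<noteq> {}" using assms set_pmf_not_empty[of p] by blast
  then have "c > 0" using assms(1) by (simp add: c_def card_gt_0_iff)
  have "entropy_pmf p = (\<Sum>x\<in>S. - log 2 (pmf p x) * pmf p x)"
    unfolding entropy_pmf_def by (rule integral_measure_pmf_real) (use assms in auto)
  also have "\<dots> = (\<Sum>x\<in>S. pmf p x * log 2 c + pmf p x * log 2 (1 / (pmf p x * c)))"
    using \<open>c > 0\<close> pmf_nonneg[of p]
    by (intro sum.cong) (auto simp: log_divide log_mult less_le algebra_simps)
  also have "\<dots> \<le> (\<Sum>x\<in>S. pmf p x * log 2 c + (1 / c - pmf p x) / ln 2)"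
  proof (intro sum_mono add_left_mono)
    fix x
    show "pmf p x * log 2 (1 / (pmf p x * c)) \<le> (1 / c - pmf p x) / ln 2"
    proof (cases "pmf p x = 0")
      case False
      then have "pmf p x > 0" using pmf_nonneg[of p x] by linarith
      have "pmf p x * ln (1 / (pmf p x * c)) \<le> pmf p x * (1 / (pmf p x * c) - 1)"
        using \<open>pmf p x > 0\<close> \<open>c > 0\<close> by (intro mult_left_mono ln_le_minus_one) auto
      also have "\<dots> = 1 / c - pmf p x"
        using \<open>pmf p x > 0\<close> by (simp add: field_simps)
      finally show ?thesis
        by (simp add: log_def divide_right_mono)
    qed (use \<open>c > 0\<close> in simp)
  qed
  also have "\<dots> = (\<Sum>x\<in>S. pmf p x) * log 2 c + (card S / c - (\<Sum>x\<in>S. pmf p x)) / ln 2"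
    by (simp add: sum.distrib sum_distrib_right sum_subtractf sum_divide_distrib[symmetric])
  also have "\<dots> = log 2 c"
    using sum_pmf_eq_1[OF assms] \<open>c > 0\<close> by (simp add: c_def)
  finally show ?thesis by (simp add: c_def)
qed

lemma entropy_pmf_of_set:
  assumes "finite S" and "S \<noteq> {}"
  shows "entropy_pmf (pmf_of_set S) = log 2 (card S)"
proof -
  have "card S > 0" using assms by (simp add: card_gt_0_iff)
  have "entropy_pmf (pmf_of_set S)
        = (\<Sum>x\<in>S. - log 2 (pmf (pmf_of_set S) x) * pmf (pmf_of_set S) x)"
    unfolding entropy_pmf_def by (rule integral_measure_pmf_real) (use assms in auto)
  also have "\<dots> = (\<Sum>x\<in>S. log 2 (card S) / card S)"
    using assms \<open>card S > 0\<close> by (intro sum.cong) (auto simp: log_divide)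
  also have "\<dots> = log 2 (card S)" using \<open>card S > 0\<close> by simp
  finally show ?thesis .
qed

lemma entropy_pmf_le_entropy_pmf_of_set:
  assumes "finite S" and "set_pmf p \<subseteq> S"
  shows "entropy_pmf p \<le> entropy_pmf (pmf_of_set S)"
proof -
  have "S \<noteq> {}" using assms(2) set_pmf_not_empty[of p] by blast
  then show ?thesis
    using entropy_pmf_le_log_card[OF assms] entropy_pmf_of_set[OF assms(1)] by simp
qed

lemma map_pmf_of_set_equal_fibres:
  assumes "finite A" and "A \<noteq> {}"
    and fibres: "\<And>x y. x \<in> A \<Longrightarrow> y \<in> A \<Longrightarrow> card (A \<inter> h -` {h x}) = card (A \<inter> h -` {h y})"
  shows "map_pmf h (pmf_of_set A) = pmf_of_set (h ` A)"
proof -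
  define fibre where "fibre y = A \<inter> h -` {y}" for y
  obtain x0 where "x0 \<in> A" using assms(2) by blast
  have "pmf_of_set (\<Union>y\<in>h ` A. fibre y) = pmf_of_set (h ` A) \<bind> (\<lambda>y. pmf_of_set (fibre y))"
  proof (rule pmf_of_set_UN[where n = "card (fibre (h x0))"])
    fix y assume "y \<in> h ` A"
    then obtain x where "x \<in> A" "y = h x" by blast
    then show "card (fibre y) = card (fibre (h x0))"
      unfolding fibre_def using fibres[OF \<open>x \<in> A\<close> \<open>x0 \<in> A\<close>] by simp
    show "fibre y \<noteq> {}" using \<open>x \<in> A\<close> \<open>y = h x\<close> by (auto simp: fibre_def)
  next
    show "finite (\<Union>y\<in>h ` A. fibre y)" using assms(1) by (simp add: fibre_def)
    show "h ` A \<noteq> {}" using assms(2) by simp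
    show "disjoint_family_on fibre (h ` A)" by (auto simp: disjoint_family_on_def fibre_def)
  qed
  moreover have "(\<Union>y\<in>h ` A. fibre y) = A" by (auto simp: fibre_def)
  ultimately have "map_pmf h (pmf_of_set A) = pmf_of_set (h ` A) \<bind> (\<lambda>y. map_pmf h (pmf_of_set (fibre y)))"
    by (simp add: map_bind_pmf)
  also have "\<dots> = pmf_of_set (h ` A) \<bind> return_pmf"
  proof (intro bind_pmf_cong refl)
    fix y assume "y \<in> set_pmf (pmf_of_set (h ` A))"
    then have "fibre y \<noteq> {}" "finite (fibre y)"
      using assms(1,2) by (auto simp: fibre_def)
    then have "map_pmf h (pmf_of_set (fibre y)) = map_pmf (\<lambda>_. y) (pmf_of_set (fibre y))"
      by (intro map_pmf_cong) (auto simp: fibre_def)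
    then show "map_pmf h (pmf_of_set (fibre y)) = return_pmf y" by simp
  qed
  finally show ?thesis by (simp add: bind_return_pmf')
qed

lemma card_fibres_eq_if_translation_invariant:
  fixes h :: "'a::group_add \<Rightarrow> 'b"
  assumes invariant: "\<And>x y d. h x = h y \<Longrightarrow> h (x + d) = h (y + d)"
  shows "card (h -` {h x}) = card (h -` {h y})"
proof (rule bij_betw_same_card)
  show "bij_betw (\<lambda>z. z + (- x + y)) (h -` {h x}) (h -` {h y})"
  proof (rule bij_betw_byWitness[where f' = "\<lambda>w. w + (- y + x)"])
    show "(\<lambda>z. z + (- x + y)) ` h -` {h x} \<subseteq> h -` {h y}"
      using invariant[of _ x "- x + y"] by (auto simp: add.assoc[symmetric])
    show "(\<lambda>w. w + (- y + x)) ` h -` {h y} \<subseteq> h -` {h x}"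
      using invariant[of _ y "- y + x"] by (auto simp: add.assoc[symmetric])
  qed (simp_all add: add.assoc[symmetric])
qed

definition class_offsets :: "('v \<Rightarrow> 'v \<Rightarrow> bool) \<Rightarrow> ('v set \<Rightarrow> word32) \<Rightarrow> 'v offsets" where
  "class_offsets sync g v = g (Collect (sync v))"

lemma max_entropy_compilation_eq:
  "max_entropy_compilation sync = map_pmf (class_offsets sync) (pmf_of_set UNIV)"
  unfolding max_entropy_compilation_def class_offsets_def by (simp add: fun_eq_iff)

lemma class_offsets_add: "class_offsets sync (g + d) = class_offsets sync g + class_offsets sync d"
  by (simp add: class_offsets_def fun_eq_iff)

lemma correct_offsets_subset_range_class_offsets:
  assumes "reflp sync"
  shows "correct_offsets sync \<subseteq> range (class_offsets sync)"
proof
  fix \<delta> assume "\<delta> \<in> correct_offsets sync"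
  have "class_offsets sync (\<lambda>C. \<delta> (SOME w. w \<in> C)) = \<delta>"
  proof
    fix v
    have "sync v (SOME w. sync v w)"
      using assms by (metis reflpD someI)
    then show "class_offsets sync (\<lambda>C. \<delta> (SOME w. w \<in> C)) v = \<delta> v"
      using \<open>\<delta> \<in> correct_offsets sync\<close> by (simp add: class_offsets_def correct_offsets_def)
  qed
  then show "\<delta> \<in> range (class_offsets sync)" by (metis rangeI)
qed

lemma run_trace_eq_iff:
  "run_trace n loc nom src a = run_trace n loc nom src b \<longleftrightarrow> (\<forall>i<n. a (src i) = b (src i))"
  unfolding run_trace_def by auto

lemma map_pmf_run_trace_max_entropy_compilation:
  "map_pmf (run_trace n loc nom src) (max_entropy_compilation sync)
   = pmf_of_set (range (run_trace n loc nom src \<circ> class_offsets sync))"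
proof -
  let ?T = "run_trace n loc nom src \<circ> class_offsets sync"
  have "card (?T -` {?T x}) = card (?T -` {?T y})" for x y
    by (rule card_fibres_eq_if_translation_invariant)
      (simp add: run_trace_eq_iff class_offsets_add)
  then have "map_pmf ?T (pmf_of_set UNIV) = pmf_of_set (range ?T)"
    by (intro map_pmf_of_set_equal_fibres) simp_all
  then show ?thesis by (simp add: max_entropy_compilation_eq pmf.map_comp)
qed

theorem proposition1:
  fixes sync :: "'v::finite \<Rightarrow> 'v \<Rightarrow> bool"
    and n :: nat and loc :: "nat \<Rightarrow> 'l" and nom :: "nat \<Rightarrow> word32" and src :: "nat \<Rightarrow> 'v"
    and q :: "'v offsets pmf"
  assumes "equivp sync"
    and "set_pmf q \<subseteq> correct_offsets sync"
  shows "entropy_pmf (map_pmf (run_trace n loc nom src) q)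
         \<le> entropy_pmf (map_pmf (run_trace n loc nom src) (max_entropy_compilation sync))"
proof -
  let ?T = "run_trace n loc nom src"
  have "set_pmf q \<subseteq> range (class_offsets sync)"
    using assms correct_offsets_subset_range_class_offsets equivp_reflp_symp_transp by blast
  then have "set_pmf (map_pmf ?T q) \<subseteq> range (?T \<circ> class_offsets sync)"
    by auto
  then show ?thesis
    unfolding map_pmf_run_trace_max_entropy_compilation
    by (intro entropy_pmf_le_entropy_pmf_of_set) simp
qed

end
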